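(* Let $A|H$, $B|K$ be conditional events with $AH\neq\emptyset$, and let $\Pi$ be the set of coherent assessments $(x,y)$ on $\{A|H,B|K\}$. The following are equivalent: (a) $\{A|H\}$ p-entails $B|K$; (b) $A|H\subseteq B|K$ or $K\subseteq B$; (c) $\Pi\subseteq\{(x,y)\in[0,1]^2:x\le y\}$. *)

theory Defs
  imports Complex_Main
begin

text \<open>Events are subsets of a set of possible worlds (the type 'w); a conditional
  event E|H is represented by the pair (E, H), with H nonempty.
  Indicator of an event at a world.\<close>

definition ind :: "'w set \<Rightarrow> 'w \<Rightarrow> real" where
  "ind E w = (if w \<in> E then 1 else 0)"

text \<open>Coherence (de Finetti betting scheme) of an assessment p on a finite family
  F of conditional events indexed by I: for every nonempty subfamily J and every
  choice of real stakes s, the random gain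
  sum over j in J of s_j * H_j * (E_j - p_j), restricted to the disjunction of the
  conditioning events of J, is not negative in all worlds of that disjunction.\<close>

definition coherent :: "'i set \<Rightarrow> ('i \<Rightarrow> 'w set \<times> 'w set) \<Rightarrow> ('i \<Rightarrow> real) \<Rightarrow> bool" where
  "coherent I F p \<longleftrightarrow>
     (\<forall>J. J \<subseteq> I \<longrightarrow> J \<noteq> {} \<longrightarrow>
        (\<forall>s :: 'i \<Rightarrow> real. \<exists>w \<in> (\<Union>j\<in>J. snd (F j)).
           (\<Sum>j\<in>J. s j * ind (snd (F j)) w * (ind (fst (F j)) w - p j)) \<ge> 0))"

definition pair_family :: "'w set \<Rightarrow> 'w set \<Rightarrow> 'w set \<Rightarrow> 'w set \<Rightarrow> nat \<Rightarrow> 'w set \<times> 'w set" where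
  "pair_family A H B K = (\<lambda>i. if i = 0 then (A, H) else (B, K))"

definition coherent_set :: "'w set \<Rightarrow> 'w set \<Rightarrow> 'w set \<Rightarrow> 'w set \<Rightarrow> (real \<times> real) set" where
  "coherent_set A H B K =
     {(x, y). coherent {0, 1} (pair_family A H B K) (\<lambda>i. if i = 0 then x else y)}"

definition p_consistent1 :: "'w set \<Rightarrow> 'w set \<Rightarrow> bool" where
  "p_consistent1 A H \<longleftrightarrow> coherent {0::nat} (\<lambda>_. (A, H)) (\<lambda>_. 1)"

definition p_entails1 :: "'w set \<Rightarrow> 'w set \<Rightarrow> 'w set \<Rightarrow> 'w set \<Rightarrow> bool" where
  "p_entails1 A H B K \<longleftrightarrow> p_consistent1 A H \<and>
     (\<forall>x y. (x, y) \<in> coherent_set A H B K \<longrightarrow> x = 1 \<longrightarrow> y = 1)"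

definition cond_incl :: "'w set \<Rightarrow> 'w set \<Rightarrow> 'w set \<Rightarrow> 'w set \<Rightarrow> bool" where
  "cond_incl A H B K \<longleftrightarrow> A \<inter> H \<subseteq> B \<inter> K \<and> (- B) \<inter> K \<subseteq> (- A) \<inter> H"

end

theory Submission
  imports Defs
begin

text \<open>Coherence of (x, y) splits into three betting conditions: on A|H alone, on
  B|K alone, and on both together; the single bets give 0 \<le> x, y \<le> 1. If
  A|H \<subseteq> B|K, the combined bet with stakes 1 on A|H and -1 on B|K gains at most
  y - x everywhere on H \<union> K, so coherence forces x \<le> y; if K \<subseteq> B, betting against
  B|K forces y = 1. If neither holds, some world of H \<union> K neither loses the bet on A|H
  at price 1 nor the bet on B|K at price 0; with a world of AH and one of K - B this
  makes (1, 0) coherent, contradicting both p-entailment and x \<le> y.\<close>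

lemma coherent_pair_iff:
  "coherent {0, 1} (pair_family A H B K) p \<longleftrightarrow>
     (\<forall>s. \<exists>w\<in>H. s * ind H w * (ind A w - p 0) \<ge> 0) \<and>
     (\<forall>s. \<exists>w\<in>K. s * ind K w * (ind B w - p 1) \<ge> 0) \<and>
     (\<forall>s0 s1. \<exists>w\<in>H \<union> K.
        s0 * ind H w * (ind A w - p 0) + s1 * ind K w * (ind B w - p 1) \<ge> 0)"
  (is "?coh \<longleftrightarrow> ?betH \<and> ?betK \<and> ?betHK")
proof
  assume ?coh
  then have bet: "\<exists>w \<in> (\<Union>j\<in>J. snd (pair_family A H B K j)).
      (\<Sum>j\<in>J. s j * ind (snd (pair_family A H B K j)) w
                  * (ind (fst (pair_family A H B K j)) w - p j)) \<ge> 0"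
    if "J \<subseteq> {0, 1}" "J \<noteq> {}" for J s
    using that unfolding coherent_def by blast
  show "?betH \<and> ?betK \<and> ?betHK"
  proof (intro conjI allI)
    fix s
    show "\<exists>w\<in>H. s * ind H w * (ind A w - p 0) \<ge> 0"
      using bet[of "{0}" "\<lambda>_. s"] by (simp add: pair_family_def)
    show "\<exists>w\<in>K. s * ind K w * (ind B w - p 1) \<ge> 0"
      using bet[of "{1}" "\<lambda>_. s"] by (simp add: pair_family_def)
  next
    fix s0 s1
    show "\<exists>w\<in>H \<union> K. s0 * ind H w * (ind A w - p 0) + s1 * ind K w * (ind B w - p 1) \<ge> 0"
      using bet[of "{0, 1}" "\<lambda>i. if i = 0 then s0 else s1"] by (simp add: pair_family_def)
  qed
next
  assume bets: "?betH \<and> ?betK \<and> ?betHK"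
  show ?coh
    unfolding coherent_def
  proof (intro allI impI)
    fix J :: "nat set" and s :: "nat \<Rightarrow> real"
    assume "J \<subseteq> {0, 1}" "J \<noteq> {}"
    then consider "J = {0}" | "J = {1}" | "J = {0, 1}" by auto
    then show "\<exists>w \<in> (\<Union>j\<in>J. snd (pair_family A H B K j)).
        (\<Sum>j\<in>J. s j * ind (snd (pair_family A H B K j)) w
                    * (ind (fst (pair_family A H B K j)) w - p j)) \<ge> 0"
    proof cases
      case 1
      with bets show ?thesis by (simp add: pair_family_def)
    next
      case 2
      with bets show ?thesis by (simp add: pair_family_def)
    next
      case 3
      with bets[THEN conjunct2, THEN conjunct2, rule_format, of "s 0" "s 1"]
      show ?thesis by (simp add: pair_family_def)
    qed
  qed
qed

lemma single_bet_bounds: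
  assumes "\<forall>s. \<exists>w\<in>H. s * ind H w * (ind E w - p) \<ge> 0"
  shows "0 \<le> p" and "p \<le> 1"
proof -
  from assms obtain w where "w \<in> H" "-1 * ind H w * (ind E w - p) \<ge> 0" by blast
  then show "0 \<le> p" by (auto simp: ind_def split: if_splits)
  from assms obtain w where "w \<in> H" "1 * ind H w * (ind E w - p) \<ge> 0" by blast
  then show "p \<le> 1" by (auto simp: ind_def split: if_splits)
qed

lemma single_bet_certain:
  assumes "\<forall>s. \<exists>w\<in>H. s * ind H w * (ind E w - p) \<ge> 0" and "H \<subseteq> E"
  shows "p = 1"
proof -
  from assms(1) obtain w where "w \<in> H" "-1 * ind H w * (ind E w - p) \<ge> 0" by blast
  with assms(2) have "1 \<le> p" by (auto simp: ind_def)
  with single_bet_bounds(2)[OF assms(1)] show "p = 1" by simp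
qed

lemma coherent_set_iff:
  "(x, y) \<in> coherent_set A H B K \<longleftrightarrow>
     (\<forall>s. \<exists>w\<in>H. s * ind H w * (ind A w - x) \<ge> 0) \<and>
     (\<forall>s. \<exists>w\<in>K. s * ind K w * (ind B w - y) \<ge> 0) \<and>
     (\<forall>s0 s1. \<exists>w\<in>H \<union> K.
        s0 * ind H w * (ind A w - x) + s1 * ind K w * (ind B w - y) \<ge> 0)"
  using coherent_pair_iff[of A H B K "\<lambda>i. if i = 0 then x else y"]
  by (simp add: coherent_set_def)

lemma coherent_set_unit_square:
  assumes "(x, y) \<in> coherent_set A H B K"
  shows "0 \<le> x \<and> x \<le> 1 \<and> 0 \<le> y \<and> y \<le> 1"
  using assms single_bet_bounds[of H A x] single_bet_bounds[of K B y]
  by (simp add: coherent_set_iff)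

lemma coherent_set_snd_eq_1:
  assumes "(x, y) \<in> coherent_set A H B K" and "K \<subseteq> B"
  shows "y = 1"
  using assms single_bet_certain[of K B y] by (simp add: coherent_set_iff)

lemma coherent_set_le_if_cond_incl:
  assumes "(x, y) \<in> coherent_set A H B K" and "cond_incl A H B K"
  shows "x \<le> y"
proof (rule ccontr)
  assume "\<not> x \<le> y"
  moreover obtain w where "w \<in> H \<union> K"
    and "1 * ind H w * (ind A w - x) + -1 * ind K w * (ind B w - y) \<ge> 0"
    using assms(1) unfolding coherent_set_iff by blast
  moreover note coherent_set_unit_square[OF assms(1)]
  ultimately show False
    using assms(2) unfolding cond_incl_def
    by (cases "w \<in> H"; cases "w \<in> A"; cases "w \<in> K"; cases "w \<in> B"; auto simp: ind_def)
qed

lemma one_zero_in_coherent_set: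
  assumes "A \<inter> H \<noteq> {}" and "\<not> (cond_incl A H B K \<or> K \<subseteq> B)"
  shows "(1, 0) \<in> coherent_set A H B K"
proof -
  obtain a where a: "a \<in> A" "a \<in> H" using assms(1) by blast
  obtain k where k: "k \<in> K" "k \<notin> B" using assms(2) by blast
  obtain w where w: "w \<in> H \<union> K" "w \<notin> H \<or> w \<in> A" "w \<notin> K \<or> w \<notin> B"
    using assms(2) unfolding cond_incl_def by blast
  show ?thesis
    unfolding coherent_set_iff
  proof (intro conjI allI)
    show "\<exists>w\<in>H. s * ind H w * (ind A w - 1) \<ge> 0" for s
      using a by (intro bexI[of _ a]) (auto simp: ind_def)
    show "\<exists>w\<in>K. s * ind K w * (ind B w - 0) \<ge> 0" for s
      using k by (intro bexI[of _ k]) (auto simp: ind_def)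
    show "\<exists>w\<in>H \<union> K. s0 * ind H w * (ind A w - 1) + s1 * ind K w * (ind B w - 0) \<ge> 0"
      for s0 s1
      using w by (intro bexI[of _ w]) (auto simp: ind_def)
  qed
qed

lemma p_consistent1_iff: "p_consistent1 A H \<longleftrightarrow> A \<inter> H \<noteq> {}"
proof
  assume "p_consistent1 A H"
  then have "\<exists>w \<in> (\<Union>j\<in>J. H). (\<Sum>j\<in>J. s j * ind H w * (ind A w - 1)) \<ge> 0"
    if "J \<subseteq> {0::nat}" "J \<noteq> {}" for J s
    using that unfolding p_consistent1_def coherent_def by simp
  from this[of "{0}" "\<lambda>_. 1"] obtain w where "w \<in> H" "1 * ind H w * (ind A w - 1) \<ge> 0"
    by auto
  then show "A \<inter> H \<noteq> {}" by (auto simp: ind_def split: if_splits)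
next
  assume "A \<inter> H \<noteq> {}"
  then obtain a where a: "a \<in> A" "a \<in> H" by blast
  show "p_consistent1 A H"
    unfolding p_consistent1_def coherent_def
  proof (intro allI impI)
    fix J :: "nat set" and s :: "nat \<Rightarrow> real"
    assume "J \<subseteq> {0}" "J \<noteq> {}"
    then have "J = {0}" by blast
    with a show "\<exists>w \<in> (\<Union>j\<in>J. snd (A, H)).
        (\<Sum>j\<in>J. s j * ind (snd (A, H)) w * (ind (fst (A, H)) w - 1)) \<ge> 0"
      by (intro bexI[of _ a]) (auto simp: ind_def)
  qed
qed

theorem theorem4:
  fixes A H B K :: "'w set"
  assumes "A \<inter> H \<noteq> {}" and "K \<noteq> {}"
  shows "(p_entails1 A H B K \<longleftrightarrow> (cond_incl A H B K \<or> K \<subseteq> B))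
       \<and> ((cond_incl A H B K \<or> K \<subseteq> B) \<longleftrightarrow>
            coherent_set A H B K \<subseteq> {(x, y). 0 \<le> x \<and> x \<le> 1 \<and> 0 \<le> y \<and> y \<le> 1 \<and> x \<le> y})"
proof -
  let ?incl = "cond_incl A H B K \<or> K \<subseteq> B"
  have ordered: "coherent_set A H B K \<subseteq> {(x, y). 0 \<le> x \<and> x \<le> 1 \<and> 0 \<le> y \<and> y \<le> 1 \<and> x \<le> y}"
    if ?incl
    using that coherent_set_unit_square coherent_set_le_if_cond_incl coherent_set_snd_eq_1
    by fastforce
  note one_zero = one_zero_in_coherent_set[OF assms(1)]
  have "p_entails1 A H B K \<longleftrightarrow> ?incl"
  proof
    assume "p_entails1 A H B K"
    then show ?incl using one_zero unfolding p_entails1_def by fastforce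
  next
    assume ?incl
    then have "\<forall>x y. (x, y) \<in> coherent_set A H B K \<longrightarrow> x = 1 \<longrightarrow> y = 1"
      using ordered by fastforce
    with assms(1) show "p_entails1 A H B K"
      by (simp add: p_entails1_def p_consistent1_iff)
  qed
  moreover have "?incl \<longleftrightarrow>
      coherent_set A H B K \<subseteq> {(x, y). 0 \<le> x \<and> x \<le> 1 \<and> 0 \<le> y \<and> y \<le> 1 \<and> x \<le> y}"
    using ordered one_zero by fastforce
  ultimately show ?thesis by blast
qed

end
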